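(* Let $q$ be a power of an odd prime and fix a partition $\mathbb{F}_q^*=\mathbb{F}_q^+\sqcup\mathbb{F}_q^-$ such that $a\in\mathbb{F}_q^+$ if and only if $-a\in\mathbb{F}_q^-$. (i) Let $\theta\in\mathbb{F}_{q^2}\setminus\mathbb{F}_q$, so that $\mathbb{F}_{q^2}=\{a\theta+b:a,b\in\mathbb{F}_q\}$. Then both $\{(x,y\theta+z):x,z\in\mathbb{F}_q,\ y\in\mathbb{F}_q^+\}$ and $\{(x,y\theta+z):x,z\in\mathbb{F}_q,\ y\in\mathbb{F}_q^-\}$ are independent sets in $G_{q^2}$. (ii) Let $t\ge3$ be odd and let $\theta\in\mathbb{F}_{q^t}$ be such that $1,\theta,\dots,\theta^{t-1}$ is a basis of $\mathbb{F}_{q^t}$ over $\mathbb{F}_q$. Then both \[ \Big\{\Big(\sum_{i=0}^{(t-3)/2}x_i\theta^i,\ \sum_{j=0}^{t-1}y_j\theta^j\Big):x_i,y_j\in\mathbb{F}_q,\ y_{t-1}\in\mathbb{F}_q^+\Big\} \] and the analogous set with $y_{t-1}\in\mathbb{F}_q^-$ are independent sets in $G_{q^t}$.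
   Context: For a power $Q$ of an odd prime, the graph $G_Q$ has vertex set $\mathbb{F}_Q\times\mathbb{F}_Q$, and distinct vertices $(x_1,x_2)$, $(y_1,y_2)$ are adjacent if and only if $(x_1+y_1)^2=x_2+y_2$ (i.e. their sum lies in $\{(a,a^2):a\in\mathbb{F}_Q\}$); $G_Q$ has no loops. *)

theory Defs
  imports Main "HOL-Computational_Algebra.Primes"
begin

definition G_adj :: "('a::field \<times> 'a) \<Rightarrow> ('a \<times> 'a) \<Rightarrow> bool" where
  "G_adj u v \<longleftrightarrow> u \<noteq> v \<and> (fst u + fst v)^2 = snd u + snd v"

definition G_independent :: "('a::field \<times> 'a) set \<Rightarrow> bool" where
  "G_independent S \<longleftrightarrow> (\<forall>u\<in>S. \<forall>v\<in>S. \<not> G_adj u v)"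

definition is_subfield :: "'a::field set \<Rightarrow> bool" where
  "is_subfield F \<longleftrightarrow> 0 \<in> F \<and> 1 \<in> F \<and>
     (\<forall>a\<in>F. \<forall>b\<in>F. a + b \<in> F \<and> a * b \<in> F) \<and>
     (\<forall>a\<in>F. - a \<in> F \<and> inverse a \<in> F)"

definition sign_partition :: "'a::field set \<Rightarrow> 'a set \<Rightarrow> 'a set \<Rightarrow> bool" where
  "sign_partition F Fp Fm \<longleftrightarrow> Fp \<union> Fm = F - {0} \<and> Fp \<inter> Fm = {} \<and>
     (\<forall>a\<in>F - {0}. a \<in> Fp \<longleftrightarrow> - a \<in> Fm)"

definition power_basis :: "'a::field set \<Rightarrow> nat \<Rightarrow> 'a \<Rightarrow> bool" where
  "power_basis F t \<theta> \<longleftrightarrow>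
     (\<forall>k. \<exists>c. (\<forall>i<t. c i \<in> F) \<and> k = (\<Sum>i<t. c i * \<theta> ^ i)) \<and>
     (\<forall>c. (\<forall>i<t. c i \<in> F) \<and> (\<Sum>i<t. c i * \<theta> ^ i) = 0 \<longrightarrow> (\<forall>i<t. c i = 0))"

definition odd_prime_power :: "nat \<Rightarrow> bool" where
  "odd_prime_power q \<longleftrightarrow> (\<exists>p k. prime p \<and> odd p \<and> k > 0 \<and> q = p ^ k)"

end

theory Submission
  imports Defs
begin

(* Both parts of the theorem are instances of one criterion.  Suppose the second
   coordinates of a vertex set have the form h + y*e, where h lies in a
   "hyperplane" H (closed under subtraction), y lies in a sign class P, and the
   scalar multiples of e meet H only in 0.  If moreover the square of every sum of
   two first coordinates lies in H, then adjacency (x1+x2)^2 = w1+w2 forces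
   (y1+y2)*e into H, hence y1 + y2 = 0, which a sign class forbids.
   Part (i) takes H = F and e = \<theta>.  Part (ii) takes H = span{1,...,\<theta>^(t-2)} and
   e = \<theta>^(t-1): first coordinates live in span{1,...,\<theta>^((t-3)/2)}, whose squares
   lie in span{1,...,\<theta>^(t-3)}. *)

lemma subfield_add: "is_subfield F \<Longrightarrow> a \<in> F \<Longrightarrow> b \<in> F \<Longrightarrow> a + b \<in> F"
  unfolding is_subfield_def by blast

lemma subfield_mult: "is_subfield F \<Longrightarrow> a \<in> F \<Longrightarrow> b \<in> F \<Longrightarrow> a * b \<in> F"
  unfolding is_subfield_def by blast

lemma subfield_uminus: "is_subfield F \<Longrightarrow> a \<in> F \<Longrightarrow> - a \<in> F"
  unfolding is_subfield_def by blast

lemma subfield_inverse: "is_subfield F \<Longrightarrow> a \<in> F \<Longrightarrow> inverse a \<in> F"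
  unfolding is_subfield_def by blast

lemma subfield_diff: "is_subfield F \<Longrightarrow> a \<in> F \<Longrightarrow> b \<in> F \<Longrightarrow> a - b \<in> F"
  using subfield_add subfield_uminus by (metis diff_conv_add_uminus)

text \<open>A sign class consists of nonzero elements of F and never contains a pair
  of opposite elements; this is the only property of the partition that is used.\<close>

lemma sign_class_subset:
  assumes "sign_partition F Fp Fm" and "P = Fp \<or> P = Fm"
  shows "P \<subseteq> F"
  using assms unfolding sign_partition_def by blast

lemma sign_class_no_opposites:
  assumes sp: "sign_partition F Fp Fm" and P: "P = Fp \<or> P = Fm"
    and "a \<in> P" and "b \<in> P"
  shows "a + b \<noteq> 0"
proof
  assume "a + b = 0"
  then have b: "b = - a" by (simp add: add_eq_0_iff)
  have "a \<in> F - {0}" and "Fp \<inter> Fm = {}" and "\<forall>a\<in>F - {0}. a \<in> Fp \<longleftrightarrow> - a \<in> Fm"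
    using sp P \<open>a \<in> P\<close> unfolding sign_partition_def by auto
  then show False using P \<open>a \<in> P\<close> \<open>b \<in> P\<close> b by blast
qed

lemma G_independent_hyperplane:
  fixes e :: "'a::field"
  assumes F: "is_subfield F" and sp: "sign_partition F Fp Fm" and P: "P = Fp \<or> P = Fm"
    and H_diff: "\<forall>a\<in>H. \<forall>b\<in>H. a - b \<in> H"
    and squares: "\<forall>x1\<in>X. \<forall>x2\<in>X. (x1 + x2)^2 \<in> H"
    and transversal: "\<forall>c\<in>F. c * e \<in> H \<longrightarrow> c = 0"
  shows "G_independent {(x, h + y * e) | x h y. x \<in> X \<and> h \<in> H \<and> y \<in> P}"
  unfolding G_independent_def G_adj_def
proof (intro ballI notI)
  fix u v
  assume "u \<in> {(x, h + y * e) | x h y. x \<in> X \<and> h \<in> H \<and> y \<in> P}"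
    and "v \<in> {(x, h + y * e) | x h y. x \<in> X \<and> h \<in> H \<and> y \<in> P}"
    and adj: "u \<noteq> v \<and> (fst u + fst v)^2 = snd u + snd v"
  then obtain x1 h1 y1 x2 h2 y2 where
    u: "u = (x1, h1 + y1 * e)" "x1 \<in> X" "h1 \<in> H" "y1 \<in> P" and
    v: "v = (x2, h2 + y2 * e)" "x2 \<in> X" "h2 \<in> H" "y2 \<in> P"
    by blast
  have "(y1 + y2) * e = ((x1 + x2)^2 - h1) - h2"
    using adj u v by (simp add: algebra_simps)
  also have "\<dots> \<in> H"
    using H_diff squares u v by blast
  finally have "(y1 + y2) * e \<in> H" .
  moreover have "y1 + y2 \<in> F"
    using sign_class_subset[OF sp P] u v subfield_add[OF F] by blast
  ultimately have "y1 + y2 = 0" using transversal by blast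
  then show False using sign_class_no_opposites[OF sp P u(4) v(4)] by contradiction
qed

definition pow_span :: "'a::field set \<Rightarrow> 'a \<Rightarrow> nat \<Rightarrow> 'a set" where
  "pow_span F \<theta> n = {v. \<exists>c. (\<forall>i. c i \<in> F) \<and> v = (\<Sum>i<n. c i * \<theta> ^ i)}"

lemma pow_spanI:
  assumes "\<forall>i. c i \<in> F" and "v = (\<Sum>i<n. c i * \<theta> ^ i)"
  shows "v \<in> pow_span F \<theta> n"
  using assms unfolding pow_span_def by auto

lemma pow_spanE:
  assumes "v \<in> pow_span F \<theta> n"
  obtains c where "\<forall>i. c i \<in> F" and "v = (\<Sum>i<n. c i * \<theta> ^ i)"
  using assms unfolding pow_span_def by auto

lemma sum_truncate:
  fixes \<theta> :: "'a::field"
  assumes "k \<le> n"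
  shows "(\<Sum>i<n. (if i < k then c i else 0) * \<theta> ^ i) = (\<Sum>i<k. c i * \<theta> ^ i)"
proof -
  have "(\<Sum>i<n. (if i < k then c i else 0) * \<theta> ^ i)
      = (\<Sum>i<k. (if i < k then c i else 0) * \<theta> ^ i)"
    using assms by (intro sum.mono_neutral_right) auto
  then show ?thesis by simp
qed

lemma pow_span_mono:
  assumes F: "is_subfield F" and "k \<le> n" and "v \<in> pow_span F \<theta> k"
  shows "v \<in> pow_span F \<theta> n"
proof -
  obtain c where c: "\<forall>i. c i \<in> F" "v = (\<Sum>i<k. c i * \<theta> ^ i)"
    using assms(3) by (rule pow_spanE)
  have "\<forall>i. (if i < k then c i else 0) \<in> F"
    using c F unfolding is_subfield_def by auto
  moreover have "v = (\<Sum>i<n. (if i < k then c i else 0) * \<theta> ^ i)"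
    using c(2) sum_truncate[OF assms(2), of c \<theta>] by simp
  ultimately show ?thesis by (rule pow_spanI)
qed

lemma pow_span_zero:
  assumes F: "is_subfield F"
  shows "0 \<in> pow_span F \<theta> n"
proof (rule pow_spanI)
  show "\<forall>i. (\<lambda>_. 0) i \<in> F" using F unfolding is_subfield_def by simp
qed simp

lemma pow_span_add:
  assumes F: "is_subfield F" and "u \<in> pow_span F \<theta> n" and "v \<in> pow_span F \<theta> n"
  shows "u + v \<in> pow_span F \<theta> n"
proof -
  obtain c where "\<forall>i. c i \<in> F" "u = (\<Sum>i<n. c i * \<theta> ^ i)"
    using assms(2) by (rule pow_spanE)
  moreover obtain d where "\<forall>i. d i \<in> F" "v = (\<Sum>i<n. d i * \<theta> ^ i)"
    using assms(3) by (rule pow_spanE)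
  ultimately have "\<forall>i. c i + d i \<in> F" "u + v = (\<Sum>i<n. (c i + d i) * \<theta> ^ i)"
    by (simp_all add: subfield_add[OF F] sum.distrib distrib_right)
  then show ?thesis by (rule pow_spanI)
qed

lemma pow_span_diff:
  assumes F: "is_subfield F" and "u \<in> pow_span F \<theta> n" and "v \<in> pow_span F \<theta> n"
  shows "u - v \<in> pow_span F \<theta> n"
proof -
  obtain c where "\<forall>i. c i \<in> F" "u = (\<Sum>i<n. c i * \<theta> ^ i)"
    using assms(2) by (rule pow_spanE)
  moreover obtain d where "\<forall>i. d i \<in> F" "v = (\<Sum>i<n. d i * \<theta> ^ i)"
    using assms(3) by (rule pow_spanE)
  ultimately have "\<forall>i. c i - d i \<in> F" "u - v = (\<Sum>i<n. (c i - d i) * \<theta> ^ i)"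
    by (simp_all add: subfield_diff[OF F] sum_subtractf left_diff_distrib)
  then show ?thesis by (rule pow_spanI)
qed

lemma pow_span_scale:
  assumes F: "is_subfield F" and "a \<in> F" and "v \<in> pow_span F \<theta> n"
  shows "a * v \<in> pow_span F \<theta> n"
proof -
  obtain c where "\<forall>i. c i \<in> F" "v = (\<Sum>i<n. c i * \<theta> ^ i)"
    using assms(3) by (rule pow_spanE)
  then have "\<forall>i. a * c i \<in> F" "a * v = (\<Sum>i<n. (a * c i) * \<theta> ^ i)"
    by (simp_all add: subfield_mult[OF F \<open>a \<in> F\<close>] sum_distrib_left mult.assoc)
  then show ?thesis by (rule pow_spanI)
qed

lemma pow_span_sum:
  assumes F: "is_subfield F" and "finite A" and "\<forall>a\<in>A. f a \<in> pow_span F \<theta> n"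
  shows "sum f A \<in> pow_span F \<theta> n"
  using assms(2,3)
  by (induction A rule: finite_induct) (simp_all add: pow_span_zero[OF F] pow_span_add[OF F])

lemma pow_span_shift:
  assumes F: "is_subfield F" and "v \<in> pow_span F \<theta> n"
  shows "\<theta> * v \<in> pow_span F \<theta> (Suc n)"
proof -
  obtain c where c: "\<forall>i. c i \<in> F" "v = (\<Sum>i<n. c i * \<theta> ^ i)"
    using assms(2) by (rule pow_spanE)
  define d where "d i = (case i of 0 \<Rightarrow> 0 | Suc j \<Rightarrow> c j)" for i
  have "\<forall>i. d i \<in> F"
    using c F unfolding is_subfield_def d_def by (auto split: nat.split)
  moreover have "\<theta> * v = (\<Sum>i<Suc n. d i * \<theta> ^ i)"
    unfolding sum.lessThan_Suc_shift using c by (simp add: d_def sum_distrib_left algebra_simps)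
  ultimately show ?thesis by (rule pow_spanI)
qed

lemma pow_span_power_mult:
  assumes F: "is_subfield F" and "v \<in> pow_span F \<theta> n"
  shows "\<theta> ^ k * v \<in> pow_span F \<theta> (n + k)"
proof (induction k)
  case 0
  then show ?case using assms(2) by simp
next
  case (Suc k)
  then show ?case using pow_span_shift[OF F] by (fastforce simp: mult.assoc)
qed

lemma pow_span_mult:
  assumes F: "is_subfield F"
    and "u \<in> pow_span F \<theta> (Suc n)" and "v \<in> pow_span F \<theta> (Suc k)"
  shows "u * v \<in> pow_span F \<theta> (Suc (n + k))"
proof -
  obtain c where c: "\<forall>i. c i \<in> F" "u = (\<Sum>i<Suc n. c i * \<theta> ^ i)"
    using assms(2) by (rule pow_spanE)
  have "u * v = (\<Sum>i<Suc n. c i * (\<theta> ^ i * v))"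
    using c by (simp add: sum_distrib_right mult.assoc del: sum.lessThan_Suc)
  also have "\<dots> \<in> pow_span F \<theta> (Suc (n + k))"
  proof (intro pow_span_sum[OF F] ballI finite_lessThan)
    fix i assume "i \<in> {..<Suc n}"
    then have "\<theta> ^ i * v \<in> pow_span F \<theta> (Suc (n + k))"
      by (intro pow_span_mono[OF F _ pow_span_power_mult[OF F assms(3)]]) simp
    then show "c i * (\<theta> ^ i * v) \<in> pow_span F \<theta> (Suc (n + k))"
      using pow_span_scale[OF F] c(1) by blast
  qed
  finally show ?thesis .
qed

lemma power_basis_transversal:
  assumes F: "is_subfield F" and pb: "power_basis F t \<theta>" and "n < t" and "c \<in> F"
    and in_span: "c * \<theta> ^ n \<in> pow_span F \<theta> n"
  shows "c = 0"
proof -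
  obtain d where d: "\<forall>i. d i \<in> F" "c * \<theta> ^ n = (\<Sum>i<n. d i * \<theta> ^ i)"
    using in_span by (rule pow_spanE)
  define e where "e i = (if i = n then c else if i < n then - d i else 0)" for i
  have "(\<Sum>i<t. e i * \<theta> ^ i) = (\<Sum>i<Suc n. e i * \<theta> ^ i)"
    using \<open>n < t\<close> by (intro sum.mono_neutral_right) (auto simp: e_def)
  also have "\<dots> = c * \<theta> ^ n - (\<Sum>i<n. d i * \<theta> ^ i)"
    by (simp add: e_def sum_negf)
  finally have "(\<Sum>i<t. e i * \<theta> ^ i) = 0" using d(2) by simp
  moreover have "\<forall>i<t. e i \<in> F"
    using d(1) \<open>c \<in> F\<close> F by (simp add: e_def is_subfield_def)
  moreover have "\<forall>e. (\<forall>i<t. e i \<in> F) \<and> (\<Sum>i<t. e i * \<theta> ^ i) = 0 \<longrightarrow> (\<forall>i<t. e i = 0)"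
    using pb unfolding power_basis_def by (rule conjunct2)
  ultimately have "e n = 0" using \<open>n < t\<close> by blast
  then show "c = 0" by (simp add: e_def)
qed

lemma subfield_transversal:
  fixes F :: "'a::field set"
  assumes F: "is_subfield F" and \<theta>: "\<theta> \<notin> F"
  shows "\<forall>c\<in>F. c * \<theta> \<in> F \<longrightarrow> c = 0"
proof (intro ballI impI)
  fix c assume "c \<in> F" "c * \<theta> \<in> F"
  show "c = 0"
  proof (rule ccontr)
    assume "c \<noteq> 0"
    then have "\<theta> = inverse c * (c * \<theta>)" by (simp add: mult.assoc[symmetric])
    also have "\<dots> \<in> F"
      using subfield_mult[OF F subfield_inverse[OF F \<open>c \<in> F\<close>] \<open>c * \<theta> \<in> F\<close>] .
    finally show False using \<theta> by contradiction
  qed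
qed

lemma independent_quadratic:
  fixes F :: "'a::field set"
  assumes F: "is_subfield F" and sp: "sign_partition F Fp Fm" and P: "P = Fp \<or> P = Fm"
    and \<theta>: "\<theta> \<notin> F"
  shows "G_independent {(x, y * \<theta> + z) | x y z. x \<in> F \<and> z \<in> F \<and> y \<in> P}"
proof -
  have diff: "\<forall>a\<in>F. \<forall>b\<in>F. a - b \<in> F"
    using subfield_diff[OF F] by blast
  have squares: "\<forall>a\<in>F. \<forall>b\<in>F. (a + b)^2 \<in> F"
    using subfield_add[OF F] subfield_mult[OF F] by (simp add: power2_eq_square)
  have "{(x, y * \<theta> + z) | x y z. x \<in> F \<and> z \<in> F \<and> y \<in> P}
      = {(x, h + y * \<theta>) | x h y. x \<in> F \<and> h \<in> F \<and> y \<in> P}"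
    by (auto simp: add.commute)
  then show ?thesis
    using G_independent_hyperplane[OF F sp P diff squares subfield_transversal[OF F \<theta>]]
    by simp
qed

lemma G_independent_subset:
  "G_independent T \<Longrightarrow> S \<subseteq> T \<Longrightarrow> G_independent S"
  unfolding G_independent_def by blast

text \<open>Part (ii): with t = 2m + 3, first coordinates lie in pow_span (m+1), their
  pairwise sums square into pow_span (2m+1) \<subseteq> pow_span (t-1) = H, and
  e = \<theta>^(t-1) is transversal to H by linear independence of the power basis.\<close>

lemma independent_odd_degree:
  fixes F :: "'a::field set"
  assumes F: "is_subfield F" and sp: "sign_partition F Fp Fm" and P: "P = Fp \<or> P = Fm"
    and "t \<ge> 3" and "odd t" and pb: "power_basis F t \<theta>"
  shows "G_independent {((\<Sum>i=0..(t-3) div 2. x i * \<theta> ^ i), (\<Sum>j=0..t-1. y j * \<theta> ^ j)) | x y.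
          (\<forall>i. x i \<in> F) \<and> (\<forall>j. y j \<in> F) \<and> y (t-1) \<in> P}"
proof -
  define m where "m = (t - 3) div 2"
  have t: "t = 2 * m + 3" using \<open>t \<ge> 3\<close> \<open>odd t\<close> unfolding m_def by (auto elim!: oddE)
  let ?X = "pow_span F \<theta> (Suc m)" and ?H = "pow_span F \<theta> (t - 1)" and ?e = "\<theta> ^ (t - 1)"
  have "\<forall>x1\<in>?X. \<forall>x2\<in>?X. (x1 + x2)^2 \<in> ?H"
  proof (intro ballI)
    fix x1 x2 assume "x1 \<in> ?X" "x2 \<in> ?X"
    then have "x1 + x2 \<in> ?X" by (rule pow_span_add[OF F])
    then have "(x1 + x2)^2 \<in> pow_span F \<theta> (Suc (m + m))"
      using pow_span_mult[OF F] by (simp add: power2_eq_square)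
    then show "(x1 + x2)^2 \<in> ?H" by (rule pow_span_mono[OF F, rotated]) (simp add: t)
  qed
  moreover have "\<forall>c\<in>F. c * ?e \<in> ?H \<longrightarrow> c = 0"
    using power_basis_transversal[OF F pb, of "t - 1"] t by simp
  moreover have "\<forall>a\<in>?H. \<forall>b\<in>?H. a - b \<in> ?H"
    using pow_span_diff[OF F] by blast
  ultimately have indep: "G_independent {(x, h + y * ?e) | x h y. x \<in> ?X \<and> h \<in> ?H \<and> y \<in> P}"
    by (intro G_independent_hyperplane[OF F sp P])
  show ?thesis
  proof (rule G_independent_subset[OF indep], safe)
    fix x y :: "nat \<Rightarrow> 'a" assume x: "\<forall>i. x i \<in> F" and y: "\<forall>j. y j \<in> F" and top: "y (t - 1) \<in> P"
    have "(\<Sum>i=0..(t-3) div 2. x i * \<theta> ^ i) \<in> ?X"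
      using x by (intro pow_spanI) (simp_all add: m_def atLeast0AtMost lessThan_Suc_atMost)
    moreover have "(\<Sum>j<t - 1. y j * \<theta> ^ j) \<in> ?H"
      using y by (intro pow_spanI) simp_all
    moreover have "(\<Sum>j=0..t-1. y j * \<theta> ^ j) = (\<Sum>j<t - 1. y j * \<theta> ^ j) + y (t - 1) * ?e"
      by (simp add: atLeast0AtMost lessThan_Suc_atMost[symmetric] t)
    ultimately show "\<exists>x' h y'. ((\<Sum>i=0..(t-3) div 2. x i * \<theta> ^ i), (\<Sum>j=0..t-1. y j * \<theta> ^ j))
        = (x', h + y' * ?e) \<and> x' \<in> ?X \<and> h \<in> ?H \<and> y' \<in> P"
      using top by blast
  qed
qed

theorem lemma3p1:
  shows
  "(\<forall>(F :: 'a::{field,finite} set) Fp Fm \<theta>.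
      is_subfield F \<and> odd_prime_power (card F) \<and> card (UNIV :: 'a set) = card F ^ 2 \<and>
      sign_partition F Fp Fm \<and> \<theta> \<notin> F \<longrightarrow>
      G_independent {(x, y * \<theta> + z) | x y z. x \<in> F \<and> z \<in> F \<and> y \<in> Fp} \<and>
      G_independent {(x, y * \<theta> + z) | x y z. x \<in> F \<and> z \<in> F \<and> y \<in> Fm})
   \<and>
   (\<forall>(F :: 'b::{field,finite} set) Fp Fm (t::nat) \<theta>.
      is_subfield F \<and> odd_prime_power (card F) \<and> card (UNIV :: 'b set) = card F ^ t \<and>
      sign_partition F Fp Fm \<and> t \<ge> 3 \<and> odd t \<and> power_basis F t \<theta> \<longrightarrow>
      G_independent {((\<Sum>i=0..(t-3) div 2. x i * \<theta> ^ i), (\<Sum>j=0..t-1. y j * \<theta> ^ j)) | x y.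
          (\<forall>i. x i \<in> F) \<and> (\<forall>j. y j \<in> F) \<and> y (t-1) \<in> Fp} \<and>
      G_independent {((\<Sum>i=0..(t-3) div 2. x i * \<theta> ^ i), (\<Sum>j=0..t-1. y j * \<theta> ^ j)) | x y.
          (\<forall>i. x i \<in> F) \<and> (\<forall>j. y j \<in> F) \<and> y (t-1) \<in> Fm})"
proof (intro conjI allI impI; elim conjE)
  fix F :: "'a set" and Fp Fm \<theta>
  assume F: "is_subfield F" and sp: "sign_partition F Fp Fm" and \<theta>: "\<theta> \<notin> F"
  show "G_independent {(x, y * \<theta> + z) | x y z. x \<in> F \<and> z \<in> F \<and> y \<in> Fp}"
    and "G_independent {(x, y * \<theta> + z) | x y z. x \<in> F \<and> z \<in> F \<and> y \<in> Fm}"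
    using independent_quadratic[OF F sp _ \<theta>] by blast+
next
  fix F :: "'b set" and Fp Fm and t :: nat and \<theta>
  assume F: "is_subfield F" and sp: "sign_partition F Fp Fm"
    and t: "t \<ge> 3" "odd t" and pb: "power_basis F t \<theta>"
  show "G_independent {((\<Sum>i=0..(t-3) div 2. x i * \<theta> ^ i), (\<Sum>j=0..t-1. y j * \<theta> ^ j)) | x y.
          (\<forall>i. x i \<in> F) \<and> (\<forall>j. y j \<in> F) \<and> y (t-1) \<in> Fp}"
    and "G_independent {((\<Sum>i=0..(t-3) div 2. x i * \<theta> ^ i), (\<Sum>j=0..t-1. y j * \<theta> ^ j)) | x y.
          (\<forall>i. x i \<in> F) \<and> (\<forall>j. y j \<in> F) \<and> y (t-1) \<in> Fm}"
    using independent_odd_degree[OF F sp _ t pb] by blast+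
qed

end
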